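(* Let $\bar n\ge2$, weights $w_{ij}\ge 0$, the matrix $L$, the directed graph $\mathcal G$, the underlying undirected graph $\mathcal G_u$ and the matrices $E,F$ be as in the context, and suppose $\mathcal G_u$ is a tree. Then $\operatorname{rank}F=\bar n-1$ if and only if $\mathcal G$ contains a directed rooted spanning tree as a subgraph.
   Context: Given weights $w_{ij}\ge 0$ ($i\ne j\in\{1,\dots,\bar n\}$), $L\in\mathbb{R}^{\bar n\times\bar n}$ has $L_{ij}=-w_{ij}$ for $i\neq j$, $L_{ii}=\sum_{j\neq i}w_{ij}$. The directed graph $\mathcal G$ has vertex set $\{1,\dots,\bar n\}$ and an arc $(i,j)$ (from $i$ to $j$) if and only if $w_{ji}>0$. The underlying undirected graph $\mathcal G_u$ has an edge between $i$ and $j$ iff $w_{ij}+w_{ji}>0$; $\bar n_e$ is its number of edges. $E\in\mathbb{R}^{\bar n\times\bar n_e}$ is an oriented incidence matrix of $\mathcal G_u$ (each edge is given an orientation and an index $l$; the $l$-th column of $E$ is $e_i-e_j$ for the edge between $i$ and $j$ oriented from $i$ to $j$), and $F\in\mathbb{R}^{\bar n\times\bar n_e}$ has $l$-th column $w_{ij}e_i-w_{ji}e_j$ when the $l$-th column of $E$ is $e_i-e_j$ (so that $L=FE^\top$). A directed rooted spanning tree of $\mathcal G$ is a subgraph which is a directed tree containing all vertices, in which every vertex except a single root vertex has exactly one incoming arc. *)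

theory Defs
  imports "Jordan_Normal_Form.DL_Rank"
begin

text \<open>Vertices are 0..<n (the paper's 1..n shifted by one).
  Weights: w i j :: real, meaningful for i \<noteq> j.\<close>

definition dg_arcs :: "nat \<Rightarrow> (nat \<Rightarrow> nat \<Rightarrow> real) \<Rightarrow> (nat \<times> nat) set" where
  "dg_arcs n w = {(i,j). i < n \<and> j < n \<and> i \<noteq> j \<and> w j i > 0}"

definition ug_adj :: "nat \<Rightarrow> (nat \<Rightarrow> nat \<Rightarrow> real) \<Rightarrow> nat \<Rightarrow> nat \<Rightarrow> bool" where
  "ug_adj n w i j \<longleftrightarrow> i < n \<and> j < n \<and> i \<noteq> j \<and> w i j + w j i > 0"

definition ug_connected :: "nat set \<Rightarrow> (nat \<Rightarrow> nat \<Rightarrow> bool) \<Rightarrow> bool" where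
  "ug_connected V adj \<longleftrightarrow>
     (\<forall>u\<in>V. \<forall>v\<in>V. (u, v) \<in> {(a, b). a \<in> V \<and> b \<in> V \<and> adj a b}\<^sup>*)"

definition ug_acyclic :: "nat set \<Rightarrow> (nat \<Rightarrow> nat \<Rightarrow> bool) \<Rightarrow> bool" where
  "ug_acyclic V adj \<longleftrightarrow>
     \<not> (\<exists>cs. 3 \<le> length cs \<and> distinct cs \<and> set cs \<subseteq> V \<and>
            (\<forall>k. k + 1 < length cs \<longrightarrow> adj (cs ! k) (cs ! (k + 1))) \<and>
            adj (last cs) (hd cs))"

definition ug_tree :: "nat set \<Rightarrow> (nat \<Rightarrow> nat \<Rightarrow> bool) \<Rightarrow> bool" where
  "ug_tree V adj \<longleftrightarrow> ug_connected V adj \<and> ug_acyclic V adj"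

definition directed_rooted_spanning_tree ::
  "nat set \<Rightarrow> (nat \<times> nat) set \<Rightarrow> (nat \<times> nat) set \<Rightarrow> nat \<Rightarrow> bool" where
  "directed_rooted_spanning_tree V A T r \<longleftrightarrow>
     T \<subseteq> A \<and> T \<subseteq> V \<times> V \<and> r \<in> V \<and>
     ug_tree V (\<lambda>a b. (a, b) \<in> T \<or> (b, a) \<in> T) \<and>
     (\<forall>u. (u, r) \<notin> T) \<and>
     (\<forall>v\<in>V. v \<noteq> r \<longrightarrow> (\<exists>!u. (u, v) \<in> T))"

definition has_directed_rooted_spanning_tree :: "nat \<Rightarrow> (nat \<Rightarrow> nat \<Rightarrow> real) \<Rightarrow> bool" where
  "has_directed_rooted_spanning_tree n w \<longleftrightarrow>
     (\<exists>T r. directed_rooted_spanning_tree {..<n} (dg_arcs n w) T r)"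

definition edge_orientation ::
  "nat \<Rightarrow> (nat \<Rightarrow> nat \<Rightarrow> real) \<Rightarrow> nat \<Rightarrow> (nat \<Rightarrow> nat \<times> nat) \<Rightarrow> bool" where
  "edge_orientation n w ne ep \<longleftrightarrow>
     (\<forall>l<ne. ug_adj n w (fst (ep l)) (snd (ep l))) \<and>
     bij_betw (\<lambda>l. {fst (ep l), snd (ep l)}) {..<ne} {{i, j} | i j. ug_adj n w i j}"

definition incidence_E :: "nat \<Rightarrow> nat \<Rightarrow> (nat \<Rightarrow> nat \<times> nat) \<Rightarrow> real mat" where
  "incidence_E n ne ep = mat n ne (\<lambda>(k, l).
     if k = fst (ep l) then 1 else if k = snd (ep l) then -1 else 0)"

definition weighted_F :: "nat \<Rightarrow> (nat \<Rightarrow> nat \<Rightarrow> real) \<Rightarrow> nat \<Rightarrow> (nat \<Rightarrow> nat \<times> nat) \<Rightarrow> real mat" where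
  "weighted_F n w ne ep = mat n ne (\<lambda>(k, l).
     if k = fst (ep l) then w (fst (ep l)) (snd (ep l))
     else if k = snd (ep l) then - w (snd (ep l)) (fst (ep l)) else 0)"

text \<open>Laplacian L (for reference; L = F * E^T).\<close>
definition laplacian :: "nat \<Rightarrow> (nat \<Rightarrow> nat \<Rightarrow> real) \<Rightarrow> real mat" where
  "laplacian n w = mat n n (\<lambda>(i, j).
     if i = j then (\<Sum>k\<in>{..<n} - {i}. w i k) else - w i j)"

end

theory Submission
  imports Defs
begin

text \<open>Since \<open>G\<^sub>u\<close> is a tree, \<open>F\<close> has \<open>n - 1\<close> columns, so \<open>rank F = n - 1\<close> says that
  its columns are independent. Column \<open>l\<close> of \<open>F\<close> is supported on the two ends of edge \<open>l\<close>,
  and its entry at an end \<open>x\<close> is nonzero exactly when edge \<open>l\<close> carries an arc of \<open>G\<close>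
  into \<open>x\<close>. For any matrix with such tree-shaped support, the columns together with unit
  vectors \<open>e\<^sub>x\<close> (\<open>x \<in> R \<noteq> {}\<close>) are independent iff the edges can be matched bijectively
  to the vertices outside \<open>R\<close>, each edge to an end where its entry is nonzero; this is
  shown by peeling off leaves. A matching onto all vertices but \<open>r\<close> is an orientation of the
  tree away from \<open>r\<close> along arcs of \<open>G\<close>, i.e. a directed spanning tree rooted at \<open>r\<close>, and
  the columns alone are independent iff such a matching exists for some \<open>r\<close>.\<close>

section \<open>Full column rank\<close>

lemma mult_mat_vec_unit_vec:
  fixes A :: "'a::semiring_1 mat"
  assumes "A \<in> carrier_mat n nc" and "j < nc"
  shows "A *\<^sub>v unit_vec nc j = col A j"
  using assms by (intro eq_vecI) auto

lemma (in vec_space) rank_lt_if_not_distinct_cols: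
  assumes A: "A \<in> carrier_mat n nc" and "\<not> distinct (cols A)"
  shows "rank A < nc"
proof -
  obtain S where S: "maximal S (\<lambda>T. T \<subseteq> set (cols A) \<and> lin_indpt T)"
    using maximal_exists[of "\<lambda>T. T \<subseteq> set (cols A) \<and> lin_indpt T" "card (set (cols A))" "{}"]
    by (meson List.finite_set card_mono empty_iff empty_subsetI finite_lin_indpt2 rev_finite_subset)
  then have "card S \<le> card (set (cols A))" by (simp add: card_mono maximal_def)
  also have "\<dots> < length (cols A)"
    using assms(2) card_distinct card_length le_neq_implies_less by blast
  finally show ?thesis
    using A rank_card_indpt[OF A S] by simp
qed

lemma kernel_trivial_imp_distinct_cols:
  fixes A :: "'a::field mat"
  assumes A: "A \<in> carrier_mat n nc"
    and ker: "\<forall>v\<in>carrier_vec nc. A *\<^sub>v v = 0\<^sub>v n \<longrightarrow> v = 0\<^sub>v nc"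
  shows "distinct (cols A)"
proof (rule ccontr)
  assume "\<not> distinct (cols A)"
  then obtain i j where ij: "i < nc" "j < nc" "i \<noteq> j" "col A i = col A j"
    using A by (metis distinct_conv_nth cols_length cols_nth carrier_matD(2))
  let ?v = "unit_vec nc i - unit_vec nc j :: 'a vec"
  have "A *\<^sub>v ?v = 0\<^sub>v n"
    using A ij by (simp add: mult_minus_distrib_mat_vec mult_mat_vec_unit_vec)
  moreover have "?v $ i \<noteq> 0" using ij by simp
  ultimately show False using ker ij(1) by fastforce
qed

lemma (in vec_space) rank_eq_iff_kernel_trivial:
  assumes A: "A \<in> carrier_mat n nc"
  shows "rank A = nc \<longleftrightarrow> (\<forall>v\<in>carrier_vec nc. A *\<^sub>v v = 0\<^sub>v n \<longrightarrow> v = 0\<^sub>v nc)"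
proof
  assume r: "rank A = nc"
  then have d: "distinct (cols A)" using rank_lt_if_not_distinct_cols[OF A] by fastforce
  show "\<forall>v\<in>carrier_vec nc. A *\<^sub>v v = 0\<^sub>v n \<longrightarrow> v = 0\<^sub>v nc"
    using lin_depI[OF A _ _ _ d] full_rank_lin_indpt[OF A r d] by blast
next
  assume ker: "\<forall>v\<in>carrier_vec nc. A *\<^sub>v v = 0\<^sub>v n \<longrightarrow> v = 0\<^sub>v nc"
  have d: "distinct (cols A)" using kernel_trivial_imp_distinct_cols[OF A ker] .
  have "lin_indpt (set (cols A))" using lin_depE[OF A _ d] ker by metis
  then show "rank A = nc" using lin_indpt_full_rank[OF A d] by blast
qed

section \<open>Trees grown by attaching leaves\<close>

definition edge_adj :: "(nat \<Rightarrow> nat \<times> nat) \<Rightarrow> nat set \<Rightarrow> nat \<Rightarrow> nat \<Rightarrow> bool" where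
  "edge_adj ep I i j \<longleftrightarrow> (\<exists>l\<in>I. {i, j} = {fst (ep l), snd (ep l)})"

lemma edge_adj_sym: "edge_adj ep I a b \<Longrightarrow> edge_adj ep I b a"
  unfolding edge_adj_def by (auto simp: insert_commute)

lemma edge_adj_mono: "edge_adj ep I a b \<Longrightarrow> I \<subseteq> J \<Longrightarrow> edge_adj ep J a b"
  unfolding edge_adj_def by blast

inductive leaf_tree :: "(nat \<Rightarrow> nat \<times> nat) \<Rightarrow> nat set \<Rightarrow> nat set \<Rightarrow> bool" for ep where
  singleton: "leaf_tree ep {x} {}"
| attach_leaf: "leaf_tree ep V I \<Longrightarrow> v \<notin> V \<Longrightarrow> u \<in> V \<Longrightarrow> l \<notin> I \<Longrightarrow>
    ep l = (u, v) \<or> ep l = (v, u) \<Longrightarrow> leaf_tree ep (insert v V) (insert l I)"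

lemma leaf_tree_finite: "leaf_tree ep V I \<Longrightarrow> finite V \<and> finite I"
  by (induction rule: leaf_tree.induct) auto

lemma leaf_tree_card: "leaf_tree ep V I \<Longrightarrow> card I + 1 = card V"
  by (induction rule: leaf_tree.induct) (auto dest: leaf_tree_finite)

lemma leaf_tree_ends: "leaf_tree ep V I \<Longrightarrow> l \<in> I \<Longrightarrow> fst (ep l) \<in> V \<and> snd (ep l) \<in> V"
  by (induction rule: leaf_tree.induct) auto

lemma ug_tree_has_leaf:
  assumes fin: "finite V" and two: "2 \<le> card V"
    and sym: "\<And>a b. adj a b \<Longrightarrow> adj b a" and irr: "\<And>a. \<not> adj a a"
    and tree: "ug_tree V adj"
  obtains v u where "v \<in> V" "u \<in> V" "adj v u" "\<And>y. y \<in> V \<Longrightarrow> adj v y \<Longrightarrow> y = u"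
proof -
  define path where "path cs \<longleftrightarrow> cs \<noteq> [] \<and> distinct cs \<and> set cs \<subseteq> V \<and>
    (\<forall>k. k + 1 < length cs \<longrightarrow> adj (cs ! k) (cs ! (k + 1)))" for cs
  obtain a b where ab: "a \<in> V" "b \<in> V" "a \<noteq> b"
    using two by (metis card_le_Suc0_iff_eq fin not_less_eq_eq numeral_2_eq_2)
  have "(a, b) \<in> {(x, y). x \<in> V \<and> y \<in> V \<and> adj x y}\<^sup>*"
    using tree ab unfolding ug_tree_def ug_connected_def by blast
  then obtain z where z: "z \<in> V" "adj a z"
    using ab(3) by (cases rule: converse_rtranclE) auto
  have "path [a, z]" using z ab irr unfolding path_def by (auto simp: less_Suc_eq)
  moreover have "length cs < card V + 1" if "path cs" for cs
    using that fin unfolding path_def by (metis card_mono distinct_card less_Suc_eq_le Suc_eq_plus1)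
  ultimately obtain ps where ps: "path ps" and longest: "\<And>qs. path qs \<Longrightarrow> length qs \<le> length ps"
    using ex_has_greatest_nat[of path "[a, z]" length "card V + 1"] by blast
  have "2 \<le> length ps" using longest \<open>path [a, z]\<close> by fastforce
  then have v: "ps ! 0 \<in> V" "ps ! 1 \<in> V" "adj (ps ! 0) (ps ! 1)"
    using ps unfolding path_def by auto
  \<comment> \<open>The first vertex of a longest path is a leaf: any other neighbour would either
    extend the path or close a cycle.\<close>
  have "y = ps ! 1" if y: "y \<in> V" "adj (ps ! 0) y" for y
  proof (cases "y \<in> set ps")
    case False
    then have "path (y # ps)"
      using ps y sym unfolding path_def by (auto simp: nth_Cons split: nat.splits)
    with longest show ?thesis by fastforce
  next
    case True
    then obtain k where k: "k < length ps" "ps ! k = y" by (metis in_set_conv_nth)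
    show "y = ps ! 1"
    proof (rule ccontr)
      assume "y \<noteq> ps ! 1"
      moreover have "k \<noteq> 0" using k y irr by metis
      ultimately have "2 \<le> k" using k by (metis One_nat_def less_2_cases not_less)
      define cs where "cs = take (k + 1) ps"
      have "last cs = y" "hd cs = ps ! 0"
        using k \<open>2 \<le> k\<close> unfolding cs_def by (simp_all add: take_Suc_conv_app_nth hd_conv_nth nth_append)
      then have "3 \<le> length cs \<and> distinct cs \<and> set cs \<subseteq> V \<and>
          (\<forall>j. j + 1 < length cs \<longrightarrow> adj (cs ! j) (cs ! (j + 1))) \<and> adj (last cs) (hd cs)"
        using ps k \<open>2 \<le> k\<close> y sym unfolding cs_def path_def
        by (auto dest: in_set_takeD)
      then show False using tree unfolding ug_tree_def ug_acyclic_def by blast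
    qed
  qed
  then show ?thesis using that v by blast
qed

lemma rtrancl_avoiding_leaf:
  assumes "(x, z) \<in> S\<^sup>*" and "x \<noteq> v"
    and into: "\<And>y. (y, v) \<in> S \<Longrightarrow> y = u" and out: "\<And>y. (v, y) \<in> S \<Longrightarrow> y = u"
    and away: "\<And>y z. (y, z) \<in> S \<Longrightarrow> y \<noteq> v \<Longrightarrow> z \<noteq> v \<Longrightarrow> (y, z) \<in> S'"
  shows "(x, if z = v then u else z) \<in> S'\<^sup>*"
  using assms(1)
proof (induction rule: rtrancl_induct)
  case base
  then show ?case using \<open>x \<noteq> v\<close> by simp
next
  case (step y z)
  show ?case
  proof (cases "y = v")
    case True
    then show ?thesis using step out[of z] by (cases "u = v") simp_all
  next
    case y: False
    show ?thesis
    proof (cases "z = v")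
      case True
      then show ?thesis using step y into[of y] by simp
    next
      case False
      then show ?thesis using step away y by (auto intro: rtrancl_into_rtrancl)
    qed
  qed
qed

lemma ug_connected_remove_leaf:
  assumes con: "ug_connected V adj"
    and into: "\<And>y. adj y v \<Longrightarrow> y = u" and out: "\<And>y. adj v y \<Longrightarrow> y = u"
    and away: "\<And>y z. adj y z \<Longrightarrow> y \<noteq> v \<Longrightarrow> z \<noteq> v \<Longrightarrow> adj' y z"
  shows "ug_connected (V - {v}) adj'"
  unfolding ug_connected_def
proof (intro ballI)
  fix x y assume x: "x \<in> V - {v}" and y: "y \<in> V - {v}"
  have "(x, y) \<in> {(a, b). a \<in> V \<and> b \<in> V \<and> adj a b}\<^sup>*"
    using con x y unfolding ug_connected_def by blast
  then have "(x, if y = v then u else y) \<in> {(a, b). a \<in> V - {v} \<and> b \<in> V - {v} \<and> adj' a b}\<^sup>*"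
    by (rule rtrancl_avoiding_leaf) (use x into out away in auto)
  then show "(x, y) \<in> {(a, b). a \<in> V - {v} \<and> b \<in> V - {v} \<and> adj' a b}\<^sup>*"
    using y by simp
qed

lemma ug_acyclic_mono:
  assumes "ug_acyclic V adj" and "V' \<subseteq> V" and "\<And>a b. adj' a b \<Longrightarrow> adj a b"
  shows "ug_acyclic V' adj'"
  using assms unfolding ug_acyclic_def by blast

lemma ug_tree_imp_leaf_tree:
  assumes "finite V" and "V \<noteq> {}"
    and "\<forall>l\<in>I. fst (ep l) \<in> V \<and> snd (ep l) \<in> V \<and> fst (ep l) \<noteq> snd (ep l)"
    and "inj_on (\<lambda>l. {fst (ep l), snd (ep l)}) I"
    and "ug_tree V (edge_adj ep I)"
  shows "leaf_tree ep V I"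
  using assms
proof (induction "card V" arbitrary: V I rule: less_induct)
  case less
  note fin = less.prems(1) and ends = less.prems(3) and inj = less.prems(4) and tree = less.prems(5)
  have irr: "\<not> edge_adj ep I a a" for a
    using ends unfolding edge_adj_def by (metis doubleton_eq_iff)
  show ?case
  proof (cases "2 \<le> card V")
    case False
    then obtain x where "V = {x}"
      using fin less.prems(2) by (metis One_nat_def card_0_eq card_1_singletonE less_2_cases not_le)
    moreover have "I = {}" using ends \<open>V = {x}\<close> by auto
    ultimately show ?thesis using leaf_tree.singleton by simp
  next
    case True
    obtain v u where vu: "v \<in> V" "u \<in> V" "edge_adj ep I v u"
      and leaf: "\<And>y. y \<in> V \<Longrightarrow> edge_adj ep I v y \<Longrightarrow> y = u"
      using ug_tree_has_leaf[OF fin True _ irr tree] edge_adj_sym by metis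
    have out: "y = u" if "edge_adj ep I v y" for y
      using leaf that ends unfolding edge_adj_def by (metis doubleton_eq_iff)
    have into: "y = u" if "edge_adj ep I y v" for y
      using out edge_adj_sym that by blast
    obtain l0 where l0: "l0 \<in> I" "{v, u} = {fst (ep l0), snd (ep l0)}"
      using vu unfolding edge_adj_def by blast
    have "u \<noteq> v" using vu irr by blast
    have unique_edge: "l = l0" if l: "l \<in> I" "v = fst (ep l) \<or> v = snd (ep l)" for l
    proof -
      obtain y where y: "{v, y} = {fst (ep l), snd (ep l)}" using l(2) by (auto simp: insert_commute)
      then have "y = u" using out l(1) unfolding edge_adj_def by blast
      then show "l = l0" using inj l(1) l0 y unfolding inj_on_def by metis
    qed
    define V' where "V' = V - {v}"
    define I' where "I' = I - {l0}"
    have away: "edge_adj ep I' y z" if yz: "edge_adj ep I y z" "y \<noteq> v" "z \<noteq> v" for y z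
    proof -
      obtain l where l: "l \<in> I" "{y, z} = {fst (ep l), snd (ep l)}"
        using yz(1) unfolding edge_adj_def by blast
      moreover have "l \<noteq> l0" using l l0(2) yz(2,3) by (metis doubleton_eq_iff)
      ultimately show ?thesis unfolding edge_adj_def I'_def by blast
    qed
    have "ug_connected V' (edge_adj ep I')"
      unfolding V'_def by (rule ug_connected_remove_leaf[where adj = "edge_adj ep I" and u = u])
        (use tree into out away in \<open>auto simp: ug_tree_def\<close>)
    moreover have "ug_acyclic V' (edge_adj ep I')"
      using tree edge_adj_mono[of ep I'] unfolding ug_tree_def V'_def I'_def
      by (blast intro: ug_acyclic_mono)
    ultimately have "ug_tree V' (edge_adj ep I')" unfolding ug_tree_def ..
    moreover have "card V' < card V" "V' \<noteq> {}" "finite V'"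
      using fin vu True \<open>u \<noteq> v\<close> unfolding V'_def by auto
    moreover have "\<forall>l\<in>I'. fst (ep l) \<in> V' \<and> snd (ep l) \<in> V' \<and> fst (ep l) \<noteq> snd (ep l)"
      using ends unique_edge unfolding I'_def V'_def by blast
    moreover have "inj_on (\<lambda>l. {fst (ep l), snd (ep l)}) I'"
      using inj unfolding I'_def by (rule inj_on_subset) auto
    ultimately have "leaf_tree ep V' I'" using less.hyps by blast
    moreover have "ep l0 = (u, v) \<or> ep l0 = (v, u)"
      using l0(2) by (cases "ep l0") (auto simp: doubleton_eq_iff)
    ultimately have "leaf_tree ep (insert v V') (insert l0 I')"
      using leaf_tree.attach_leaf vu \<open>u \<noteq> v\<close> unfolding V'_def I'_def by blast
    moreover have "insert v V' = V" "insert l0 I' = I" using vu l0 unfolding V'_def I'_def by auto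
    ultimately show ?thesis by simp
  qed
qed

section \<open>Matrices supported on the edges of a tree\<close>

text \<open>The columns \<open>l \<in> I\<close> of \<open>M\<close> together with the unit vectors \<open>e\<^sub>x\<close>, \<open>x \<in> R\<close>, are
  linearly independent as vectors indexed by \<open>V\<close>; the coefficients of the unit vectors are \<open>d\<close>.\<close>
definition indep_units :: "nat set \<Rightarrow> nat set \<Rightarrow> (nat \<Rightarrow> nat \<Rightarrow> 'a::field) \<Rightarrow> nat set \<Rightarrow> bool" where
  "indep_units V I M R \<longleftrightarrow>
     (\<forall>c d. (\<forall>k\<in>V. (\<Sum>l\<in>I. c l * M k l) + (if k \<in> R then d k else 0) = 0)
        \<longrightarrow> (\<forall>l\<in>I. c l = 0) \<and> (\<forall>x\<in>R. d x = 0))"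

definition has_transversal :: "(nat \<Rightarrow> nat \<Rightarrow> 'a::zero) \<Rightarrow> nat set \<Rightarrow> nat set \<Rightarrow> bool" where
  "has_transversal M I S \<longleftrightarrow> (\<exists>h. bij_betw h I S \<and> (\<forall>l\<in>I. M (h l) l \<noteq> 0))"

lemma has_transversal_card: "has_transversal M I S \<Longrightarrow> card I = card S"
  unfolding has_transversal_def by (auto intro: bij_betw_same_card)

lemma has_transversal_hits_row: "has_transversal M I S \<Longrightarrow> x \<in> S \<Longrightarrow> \<exists>l\<in>I. M x l \<noteq> 0"
  unfolding has_transversal_def bij_betw_def by fastforce

lemma has_transversal_insert_col:
  assumes "l0 \<notin> I"
  shows "has_transversal M (insert l0 I) S \<longleftrightarrow> (\<exists>x\<in>S. M x l0 \<noteq> 0 \<and> has_transversal M I (S - {x}))"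
proof
  assume "has_transversal M (insert l0 I) S"
  then obtain h where h: "bij_betw h (insert l0 I) S" "\<forall>l\<in>insert l0 I. M (h l) l \<noteq> 0"
    unfolding has_transversal_def by blast
  have "h ` I = S - {h l0}"
    using h(1) assms unfolding bij_betw_def inj_on_def by auto
  then have "bij_betw h I (S - {h l0})"
    using bij_betw_subset[OF h(1)] by blast
  then show "\<exists>x\<in>S. M x l0 \<noteq> 0 \<and> has_transversal M I (S - {x})"
    using h unfolding has_transversal_def by (meson bij_betwE insertCI)
next
  assume "\<exists>x\<in>S. M x l0 \<noteq> 0 \<and> has_transversal M I (S - {x})"
  then obtain x h where x: "x \<in> S" "M x l0 \<noteq> 0"
    and h: "bij_betw h I (S - {x})" "\<forall>l\<in>I. M (h l) l \<noteq> 0"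
    unfolding has_transversal_def by blast
  have "bij_betw (h(l0 := x)) I (S - {x})"
    using h(1) assms by (subst bij_betw_cong[of I _ h]) auto
  then have "bij_betw (h(l0 := x)) (insert l0 I) S"
    using notIn_Un_bij_betw3[of l0 I "h(l0 := x)" "S - {x}"] assms x by (simp add: insert_absorb)
  then show "has_transversal M (insert l0 I) S"
    using h(2) x assms unfolding has_transversal_def by (intro exI[of _ "h(l0 := x)"]) auto
qed

text \<open>One leaf-peeling step: the leaf \<open>v\<close> is joined to \<open>u\<close> by the edge (column) \<open>l0\<close>.\<close>
locale leaf_column =
  fixes M :: "nat \<Rightarrow> nat \<Rightarrow> 'a::field" and V I :: "nat set" and v u l0 :: nat
  assumes finite_I: "finite I" and new_col: "l0 \<notin> I"
    and stem: "u \<in> V" and leaf: "v \<notin> V"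
    and leaf_row: "\<And>l. l \<in> I \<Longrightarrow> M v l = 0"
    and new_col_support: "\<And>k. k \<in> V \<Longrightarrow> k \<noteq> u \<Longrightarrow> M k l0 = 0"
begin

lemma stem_neq_leaf: "u \<noteq> v"
  using stem leaf by blast

lemma sum_insert_new_col:
  "(\<Sum>l\<in>insert l0 I. c l * M k l) = c l0 * M k l0 + (\<Sum>l\<in>I. c l * M k l)"
  using finite_I new_col by simp

lemma sum_leaf_row: "(\<Sum>l\<in>I. c l * M v l) = 0"
  using leaf_row by simp

lemma not_indep_units_attach:
  assumes "M v l0 = 0 \<or> v \<in> R" and "M u l0 = 0 \<or> u \<in> R"
  shows "\<not> indep_units (insert v V) (insert l0 I) M R"
proof
  assume indep: "indep_units (insert v V) (insert l0 I) M R"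
  define c where "c l = (if l = l0 then (1::'a) else 0)" for l :: nat
  define d where "d x = - M x l0" for x
  have "c l = 0" if "l \<in> I" for l
    using that new_col by (auto simp: c_def)
  then have "(\<Sum>l\<in>insert l0 I. c l * M k l) = M k l0" for k
    unfolding sum_insert_new_col by (simp add: c_def)
  then have "\<forall>k\<in>insert v V. (\<Sum>l\<in>insert l0 I. c l * M k l) + (if k \<in> R then d k else 0) = 0"
    using assms new_col_support by (auto simp: d_def)
  then have "c l0 = 0" using indep unfolding indep_units_def by blast
  then show False by (simp add: c_def)
qed

lemma indep_units_attach_leaf:
  assumes leaf_nz: "M v l0 \<noteq> 0" and "v \<notin> R"
  shows "indep_units (insert v V) (insert l0 I) M R \<longleftrightarrow> indep_units V I M R"
proof
  assume indep: "indep_units (insert v V) (insert l0 I) M R"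
  show "indep_units V I M R" unfolding indep_units_def
  proof (intro allI impI)
    fix c d assume rows: "\<forall>k\<in>V. (\<Sum>l\<in>I. c l * M k l) + (if k \<in> R then d k else 0) = 0"
    have "(\<Sum>l\<in>I. c l * M k l) = (\<Sum>l\<in>I. (c(l0 := 0)) l * M k l)" for k
      using new_col by (intro sum.cong) auto
    then have "\<forall>k\<in>insert v V. (\<Sum>l\<in>insert l0 I. (c(l0 := 0)) l * M k l) + (if k \<in> R then d k else 0) = 0"
      using rows \<open>v \<notin> R\<close> leaf_row unfolding sum_insert_new_col by auto
    then have "(\<forall>l\<in>insert l0 I. (c(l0 := 0)) l = 0) \<and> (\<forall>x\<in>R. d x = 0)"
      using indep unfolding indep_units_def by blast
    then show "(\<forall>l\<in>I. c l = 0) \<and> (\<forall>x\<in>R. d x = 0)" using new_col by (metis fun_upd_other insertCI)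
  qed
next
  assume indep: "indep_units V I M R"
  show "indep_units (insert v V) (insert l0 I) M R" unfolding indep_units_def
  proof (intro allI impI)
    fix c d
    assume rows: "\<forall>k\<in>insert v V. (\<Sum>l\<in>insert l0 I. c l * M k l) + (if k \<in> R then d k else 0) = 0"
    have "c l0 * M v l0 = 0" using rows \<open>v \<notin> R\<close> sum_leaf_row unfolding sum_insert_new_col by auto
    then have "c l0 = 0" using leaf_nz by simp
    then have "\<forall>k\<in>V. (\<Sum>l\<in>I. c l * M k l) + (if k \<in> R then d k else 0) = 0"
      using rows unfolding sum_insert_new_col by auto
    then have "(\<forall>l\<in>I. c l = 0) \<and> (\<forall>x\<in>R. d x = 0)"
      using indep unfolding indep_units_def by blast
    then show "(\<forall>l\<in>insert l0 I. c l = 0) \<and> (\<forall>x\<in>R. d x = 0)" using \<open>c l0 = 0\<close> by auto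
  qed
qed

text \<open>If the entry of \<open>l0\<close> in row \<open>v\<close> is useless, column \<open>l0\<close> can only serve row \<open>u\<close>:
  it behaves like the unit vector \<open>e\<^sub>u\<close>.\<close>
lemma indep_units_attach_stem:
  assumes stem_nz: "M u l0 \<noteq> 0" and "u \<notin> R" and leaf_covered: "M v l0 = 0 \<or> v \<in> R"
  shows "indep_units (insert v V) (insert l0 I) M R \<longleftrightarrow> indep_units V I M (insert u (R - {v}))"
proof
  assume indep: "indep_units (insert v V) (insert l0 I) M R"
  show "indep_units V I M (insert u (R - {v}))" unfolding indep_units_def
  proof (intro allI impI)
    fix c d
    assume rows: "\<forall>k\<in>V. (\<Sum>l\<in>I. c l * M k l) + (if k \<in> insert u (R - {v}) then d k else 0) = 0"
    define c' where "c' = c(l0 := d u / M u l0)"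
    define d' where "d' = d(v := - M v l0 * c' l0)"
    have c'_I: "c' l = c l" if "l \<in> I" for l
      using that new_col unfolding c'_def by (metis fun_upd_other)
    then have sum_I: "(\<Sum>l\<in>I. c' l * M k l) = (\<Sum>l\<in>I. c l * M k l)" for k
      by simp
    have "(\<Sum>l\<in>insert l0 I. c' l * M k l) + (if k \<in> R then d' k else 0) = 0"
      if k: "k \<in> insert v V" for k
    proof -
      consider "k = v" | "k = u" | "k \<in> V" "k \<noteq> u" "k \<noteq> v" using k by blast
      then show ?thesis
      proof cases
        case 1
        then show ?thesis
          using leaf_covered sum_leaf_row unfolding sum_insert_new_col sum_I by (auto simp: d'_def)
      next
        case 2
        have "c' l0 * M u l0 = d u" using stem_nz by (simp add: c'_def)
        then show ?thesis using 2 rows stem \<open>u \<notin> R\<close> unfolding sum_insert_new_col sum_I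
          by (auto simp: add.commute)
      next
        case 3
        then show ?thesis using rows new_col_support unfolding sum_insert_new_col sum_I
          by (auto simp: d'_def)
      qed
    qed
    then have zero: "\<forall>l\<in>insert l0 I. c' l = 0" "\<forall>x\<in>R. d' x = 0"
      using indep unfolding indep_units_def by blast+
    have "d u = 0" using zero(1) stem_nz by (simp add: c'_def)
    moreover have "d x = 0" if "x \<in> R - {v}" for x
      using bspec[OF zero(2), of x] that unfolding d'_def by simp
    ultimately show "(\<forall>l\<in>I. c l = 0) \<and> (\<forall>x\<in>insert u (R - {v}). d x = 0)"
      using zero(1) c'_I by auto
  qed
next
  assume indep: "indep_units V I M (insert u (R - {v}))"
  show "indep_units (insert v V) (insert l0 I) M R" unfolding indep_units_def
  proof (intro allI impI)
    fix c d
    assume rows: "\<forall>k\<in>insert v V. (\<Sum>l\<in>insert l0 I. c l * M k l) + (if k \<in> R then d k else 0) = 0"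
    define d' where "d' = d(u := c l0 * M u l0)"
    have "(\<Sum>l\<in>I. c l * M k l) + (if k \<in> insert u (R - {v}) then d' k else 0) = 0"
      if k: "k \<in> V" for k
      using rows k leaf \<open>u \<notin> R\<close> new_col_support[of k]
      unfolding sum_insert_new_col by (cases "k = u") (auto simp: d'_def add.commute)
    then have zero: "\<forall>l\<in>I. c l = 0" "\<forall>x\<in>insert u (R - {v}). d' x = 0"
      using indep unfolding indep_units_def by blast+
    then have "c l0 = 0" using stem_nz by (simp add: d'_def)
    with zero have "\<forall>l\<in>insert l0 I. c l = 0" by simp
    moreover have "d v = 0" if "v \<in> R"
      using rows that \<open>\<forall>l\<in>insert l0 I. c l = 0\<close> by simp
    moreover have "d x = 0" if "x \<in> R - {v}" for x
      using bspec[OF zero(2), of x] that \<open>u \<notin> R\<close> unfolding d'_def by (cases "x = u") auto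
    ultimately show "(\<forall>l\<in>insert l0 I. c l = 0) \<and> (\<forall>x\<in>R. d x = 0)"
      by blast
  qed
qed

lemma transversal_attach_leaf:
  assumes "v \<notin> R"
  shows "has_transversal M (insert l0 I) (insert v V - R) \<longleftrightarrow>
         M v l0 \<noteq> 0 \<and> has_transversal M I (V - R)"
  unfolding has_transversal_insert_col[OF new_col]
proof
  assume "\<exists>x\<in>insert v V - R. M x l0 \<noteq> 0 \<and> has_transversal M I (insert v V - R - {x})"
  then obtain x where x: "x \<in> insert v V - R" "M x l0 \<noteq> 0"
    and tr: "has_transversal M I (insert v V - R - {x})" by blast
  have "x = v"
    using has_transversal_hits_row[OF tr, of v] leaf_row \<open>v \<notin> R\<close> by force
  moreover have "insert v V - R - {v} = V - R" using leaf by blast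
  ultimately show "M v l0 \<noteq> 0 \<and> has_transversal M I (V - R)" using x tr by simp
next
  assume "M v l0 \<noteq> 0 \<and> has_transversal M I (V - R)"
  moreover have "insert v V - R - {v} = V - R" using leaf by blast
  ultimately show "\<exists>x\<in>insert v V - R. M x l0 \<noteq> 0 \<and> has_transversal M I (insert v V - R - {x})"
    using \<open>v \<notin> R\<close> by (intro bexI[of _ v]) auto
qed

lemma transversal_attach_stem:
  assumes "v \<in> R"
  shows "has_transversal M (insert l0 I) (insert v V - R) \<longleftrightarrow>
         M u l0 \<noteq> 0 \<and> u \<notin> R \<and> has_transversal M I (V - insert u (R - {v}))"
  unfolding has_transversal_insert_col[OF new_col]
proof
  assume "\<exists>x\<in>insert v V - R. M x l0 \<noteq> 0 \<and> has_transversal M I (insert v V - R - {x})"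
  then obtain x where x: "x \<in> insert v V - R" "M x l0 \<noteq> 0"
    and tr: "has_transversal M I (insert v V - R - {x})" by blast
  have "x = u" using x new_col_support \<open>v \<in> R\<close> by blast
  moreover have "insert v V - R - {u} = V - insert u (R - {v})" using leaf \<open>v \<in> R\<close> by blast
  ultimately show "M u l0 \<noteq> 0 \<and> u \<notin> R \<and> has_transversal M I (V - insert u (R - {v}))"
    using x tr by simp
next
  assume u: "M u l0 \<noteq> 0 \<and> u \<notin> R \<and> has_transversal M I (V - insert u (R - {v}))"
  moreover have "insert v V - R - {u} = V - insert u (R - {v})" using leaf \<open>v \<in> R\<close> by blast
  ultimately show "\<exists>x\<in>insert v V - R. M x l0 \<noteq> 0 \<and> has_transversal M I (insert v V - R - {x})"
    using stem by (intro bexI[of _ u]) auto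
qed

end

definition supported_on_edges ::
  "(nat \<Rightarrow> nat \<times> nat) \<Rightarrow> nat set \<Rightarrow> nat set \<Rightarrow> (nat \<Rightarrow> nat \<Rightarrow> 'a::zero) \<Rightarrow> bool" where
  "supported_on_edges ep V I M \<longleftrightarrow>
     (\<forall>l\<in>I. \<forall>k\<in>V. M k l \<noteq> 0 \<longrightarrow> k = fst (ep l) \<or> k = snd (ep l))"

lemma supported_on_edges_mono:
  "supported_on_edges ep V I M \<Longrightarrow> V' \<subseteq> V \<Longrightarrow> I' \<subseteq> I \<Longrightarrow> supported_on_edges ep V' I' M"
  unfolding supported_on_edges_def by blast

lemma leaf_column_attach:
  fixes M :: "nat \<Rightarrow> nat \<Rightarrow> 'a::field"
  assumes "leaf_tree ep V I" and "v \<notin> V" and "u \<in> V" and "l0 \<notin> I"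
    and "ep l0 = (u, v) \<or> ep l0 = (v, u)"
    and "supported_on_edges ep (insert v V) (insert l0 I) M"
  shows "leaf_column M V I v u l0"
proof
  show "finite I" using leaf_tree_finite[OF assms(1)] by blast
  show "M v l = 0" if "l \<in> I" for l
  proof -
    have "v \<noteq> fst (ep l)" "v \<noteq> snd (ep l)"
      using leaf_tree_ends[OF assms(1) that] assms(2) by auto
    then show ?thesis using assms(6) that unfolding supported_on_edges_def by blast
  qed
  show "M k l0 = 0" if "k \<in> V" "k \<noteq> u" for k
  proof -
    have "k \<noteq> fst (ep l0)" "k \<noteq> snd (ep l0)" using assms(2,5) that by auto
    then show ?thesis using assms(6) that unfolding supported_on_edges_def by blast
  qed
qed (use assms in auto)

lemma (in leaf_column) indep_units_iff_transversal_attach: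
  assumes IH: "\<And>R. R \<subseteq> V \<Longrightarrow> R \<noteq> {} \<Longrightarrow> indep_units V I M R \<longleftrightarrow> has_transversal M I (V - R)"
    and tree_card: "card I + 1 = card V" and "finite V"
    and R: "R \<subseteq> insert v V" "R \<noteq> {}"
  shows "indep_units (insert v V) (insert l0 I) M R \<longleftrightarrow>
         has_transversal M (insert l0 I) (insert v V - R)"
proof (cases "v \<in> R")
  case True
  show ?thesis
  proof (cases "M u l0 \<noteq> 0 \<and> u \<notin> R")
    case stem_free: True
    then have "indep_units (insert v V) (insert l0 I) M R \<longleftrightarrow> indep_units V I M (insert u (R - {v}))"
      using True by (intro indep_units_attach_stem) auto
    also have "\<dots> \<longleftrightarrow> has_transversal M I (V - insert u (R - {v}))"
      by (rule IH) (use R stem in auto)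
    also have "\<dots> \<longleftrightarrow> has_transversal M (insert l0 I) (insert v V - R)"
      using transversal_attach_stem[OF True] stem_free by simp
    finally show ?thesis .
  next
    case False
    then show ?thesis
      using not_indep_units_attach[of R] transversal_attach_stem[OF True] True by auto
  qed
next
  case False
  then have "R \<subseteq> V" using R by blast
  show ?thesis
  proof (cases "M v l0 \<noteq> 0")
    case True
    then show ?thesis
      using indep_units_attach_leaf[OF True False] transversal_attach_leaf[OF False]
        IH[OF \<open>R \<subseteq> V\<close> R(2)] by simp
  next
    case leaf_zero: False
    have "\<not> indep_units (insert v V) (insert l0 I) M R"
    proof
      assume indep: "indep_units (insert v V) (insert l0 I) M R"
      then have stem_free: "M u l0 \<noteq> 0" "u \<notin> R"
        using not_indep_units_attach[of R] leaf_zero by auto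
      moreover have "R - {v} = R" using False by blast
      ultimately have "indep_units V I M (insert u R)"
        using indep indep_units_attach_stem[of R] leaf_zero by simp
      then have "has_transversal M I (V - insert u R)"
        using IH[of "insert u R"] \<open>R \<subseteq> V\<close> stem by simp
      then have "card I = card (V - insert u R)" by (rule has_transversal_card)
      \<comment> \<open>but with \<open>R \<noteq> {}\<close> at least two rows are left uncovered\<close>
      moreover have "finite R" using \<open>R \<subseteq> V\<close> \<open>finite V\<close> by (rule finite_subset)
      then have "card (insert u R) \<ge> 2"
        using R(2) stem_free(2) by (simp add: Suc_le_eq card_gt_0_iff)
      moreover have "card (insert u R) \<le> card V"
        using \<open>R \<subseteq> V\<close> stem \<open>finite V\<close> by (intro card_mono) auto
      moreover have "card (V - insert u R) = card V - card (insert u R)"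
        using \<open>R \<subseteq> V\<close> stem \<open>finite V\<close> by (simp add: card_Diff_subset finite_subset)
      ultimately show False using tree_card by linarith
    qed
    moreover have "\<not> has_transversal M (insert l0 I) (insert v V - R)"
      using transversal_attach_leaf[OF False] leaf_zero by simp
    ultimately show ?thesis by blast
  qed
qed

lemma (in leaf_column) indep_iff_rooted_transversal_attach:
  assumes IH0: "indep_units V I M {} \<longleftrightarrow> (\<exists>r\<in>V. has_transversal M I (V - {r}))"
    and IH1: "indep_units V I M {u} \<longleftrightarrow> has_transversal M I (V - {u})"
  shows "indep_units (insert v V) (insert l0 I) M {} \<longleftrightarrow>
         (\<exists>r\<in>insert v V. has_transversal M (insert l0 I) (insert v V - {r}))"
proof -
  have root_old: "has_transversal M (insert l0 I) (insert v V - {r}) \<longleftrightarrow>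
      M v l0 \<noteq> 0 \<and> has_transversal M I (V - {r})" if "r \<in> V" for r
    using transversal_attach_leaf[of "{r}"] that leaf by auto
  have root_leaf: "has_transversal M (insert l0 I) (insert v V - {v}) \<longleftrightarrow>
      M u l0 \<noteq> 0 \<and> has_transversal M I (V - {u})"
    using transversal_attach_stem[of "{v}"] stem_neq_leaf by auto
  show ?thesis
  proof (cases "M v l0 \<noteq> 0")
    case True
    then have "indep_units (insert v V) (insert l0 I) M {} \<longleftrightarrow> (\<exists>r\<in>V. has_transversal M I (V - {r}))"
      using indep_units_attach_leaf IH0 by simp
    then show ?thesis using root_old root_leaf True stem by blast
  next
    case leaf_zero: False
    show ?thesis
    proof (cases "M u l0 \<noteq> 0")
      case True
      then have "indep_units (insert v V) (insert l0 I) M {} \<longleftrightarrow> indep_units V I M {u}"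
        using indep_units_attach_stem[of "{}"] leaf_zero by simp
      then show ?thesis using IH1 root_old root_leaf True leaf_zero by auto
    next
      case False
      then show ?thesis using not_indep_units_attach[of "{}"] leaf_zero root_old root_leaf by auto
    qed
  qed
qed

theorem leaf_tree_indep_units_iff_transversal:
  assumes "leaf_tree ep V I" and "supported_on_edges ep V I M" and "R \<subseteq> V" and "R \<noteq> {}"
  shows "indep_units V I M R \<longleftrightarrow> has_transversal M I (V - R)"
  using assms
proof (induction arbitrary: R rule: leaf_tree.induct)
  case (singleton x)
  then have "R = {x}" by auto
  then show ?case unfolding indep_units_def has_transversal_def by auto
next
  case (attach_leaf V I v u l0)
  interpret leaf_column M V I v u l0
    using leaf_column_attach attach_leaf.hyps attach_leaf.prems(1) by blast
  show ?case
  proof (rule indep_units_iff_transversal_attach)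
    show "indep_units V I M R' \<longleftrightarrow> has_transversal M I (V - R')" if "R' \<subseteq> V" "R' \<noteq> {}" for R'
      using attach_leaf.IH supported_on_edges_mono[OF attach_leaf.prems(1)] that by blast
  qed (use leaf_tree_card leaf_tree_finite attach_leaf in auto)
qed

theorem leaf_tree_indep_iff_rooted_transversal:
  assumes "leaf_tree ep V I" and "supported_on_edges ep V I M"
  shows "indep_units V I M {} \<longleftrightarrow> (\<exists>r\<in>V. has_transversal M I (V - {r}))"
  using assms
proof (induction rule: leaf_tree.induct)
  case (singleton x)
  then show ?case unfolding indep_units_def has_transversal_def by auto
next
  case (attach_leaf V I v u l0)
  interpret leaf_column M V I v u l0
    using leaf_column_attach attach_leaf.hyps attach_leaf.prems by blast
  have supp: "supported_on_edges ep V I M"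
    using supported_on_edges_mono[OF attach_leaf.prems] by blast
  show ?case
    using indep_iff_rooted_transversal_attach attach_leaf.IH[OF supp]
      leaf_tree_indep_units_iff_transversal[OF attach_leaf.hyps(1) supp, of "{u}"] stem
    by blast
qed

definition support_arcs ::
  "(nat \<Rightarrow> nat \<times> nat) \<Rightarrow> nat set \<Rightarrow> (nat \<Rightarrow> nat \<Rightarrow> 'a::zero) \<Rightarrow> (nat \<times> nat) set" where
  "support_arcs ep I M = {(i, j). \<exists>l\<in>I. {i, j} = {fst (ep l), snd (ep l)} \<and> M j l \<noteq> 0}"

theorem transversal_if_reachable:
  fixes M :: "nat \<Rightarrow> nat \<Rightarrow> 'a::field"
  assumes "leaf_tree ep V I" and "supported_on_edges ep V I M"
    and "r \<in> V" and "\<forall>x\<in>V. (r, x) \<in> (support_arcs ep I M)\<^sup>*"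
  shows "has_transversal M I (V - {r})"
  using assms
proof (induction arbitrary: r rule: leaf_tree.induct)
  case (singleton x)
  then show ?case unfolding has_transversal_def by auto
next
  case (attach_leaf V I v u l0)
  interpret leaf_column M V I v u l0
    using leaf_column_attach attach_leaf.hyps attach_leaf.prems(1) by blast
  have supp: "supported_on_edges ep V I M"
    using supported_on_edges_mono[OF attach_leaf.prems(1)] by blast
  let ?A = "support_arcs ep I M" and ?A' = "support_arcs ep (insert l0 I) M"
  have new_edge: "{fst (ep l0), snd (ep l0)} = {u, v}" using attach_leaf.hyps(5) by auto
  have old_edge: "v \<notin> {fst (ep l), snd (ep l)}" if "l \<in> I" for l
    using leaf_tree_ends[OF attach_leaf.hyps(1) that] leaf by auto
  have into: "y = u \<and> M v l0 \<noteq> 0" if "(y, v) \<in> ?A'" for y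
    using that old_edge new_edge stem_neq_leaf unfolding support_arcs_def
    by (auto simp: doubleton_eq_iff)
  have out: "y = u \<and> M u l0 \<noteq> 0" if "(v, y) \<in> ?A'" for y
    using that old_edge new_edge stem_neq_leaf unfolding support_arcs_def
    by (auto simp: doubleton_eq_iff)
  have away: "(y, z) \<in> ?A" if "(y, z) \<in> ?A'" "y \<noteq> v" "z \<noteq> v" for y z
    using that new_edge unfolding support_arcs_def by (auto simp: doubleton_eq_iff)
  have reach: "(x, if z = v then u else z) \<in> ?A\<^sup>*" if "(x, z) \<in> ?A'\<^sup>*" "x \<noteq> v" for x z
    using rtrancl_avoiding_leaf[OF that] into out away by blast
  show ?case
  proof (cases "r = v")
    case False
    then have "r \<in> V" using attach_leaf.prems(2) by blast
    have "(r, x) \<in> ?A\<^sup>*" if "x \<in> V" for x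
      using reach[of r x] attach_leaf.prems(3) that leaf False by (metis insertCI)
    then have "has_transversal M I (V - {r})" using attach_leaf.IH[OF supp \<open>r \<in> V\<close>] by blast
    moreover obtain y where "(y, v) \<in> ?A'"
      using attach_leaf.prems(3) False by (metis insertCI rtranclE)
    ultimately show ?thesis using transversal_attach_leaf[of "{r}"] into False by auto
  next
    case True
    have first_step: "(v, u) \<in> ?A' \<and> (u, x) \<in> ?A'\<^sup>*" if x: "x \<in> V" for x
    proof -
      have "(v, x) \<in> ?A'\<^sup>*" using attach_leaf.prems(3) True x by blast
      then obtain y where "(v, y) \<in> ?A'" "(y, x) \<in> ?A'\<^sup>*"
        using x leaf by (metis converse_rtranclE)
      then show ?thesis using out by blast
    qed
    have "(u, x) \<in> ?A\<^sup>*" if "x \<in> V" for x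
      using reach[of u x] first_step[OF that] that leaf stem_neq_leaf by (cases "x = v") auto
    then have "has_transversal M I (V - {u})" using attach_leaf.IH[OF supp stem] by blast
    moreover have "M u l0 \<noteq> 0" using out first_step[OF stem] by blast
    ultimately show ?thesis
      using transversal_attach_stem[of "{v}"] True stem_neq_leaf by simp
  qed
qed

section \<open>The weighted incidence matrix\<close>

lemma kernel_trivial_iff_indep_units:
  fixes A :: "'a::field mat"
  assumes A: "A \<in> carrier_mat n nc"
  shows "(\<forall>v\<in>carrier_vec nc. A *\<^sub>v v = 0\<^sub>v n \<longrightarrow> v = 0\<^sub>v nc) \<longleftrightarrow>
         indep_units {..<n} {..<nc} (\<lambda>k l. A $$ (k, l)) {}"
proof -
  have mult: "(A *\<^sub>v v) $ k = (\<Sum>l<nc. v $ l * A $$ (k, l))" if "v \<in> carrier_vec nc" "k < n" for v k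
  proof -
    have "(A *\<^sub>v v) $ k = (\<Sum>l\<in>{0..<nc}. row A k $ l * v $ l)"
      using A that by (simp add: scalar_prod_def)
    also have "\<dots> = (\<Sum>l<nc. v $ l * A $$ (k, l))"
      using A that by (auto simp: lessThan_atLeast0 intro: sum.cong)
    finally show ?thesis .
  qed
  show ?thesis
  proof
    assume ker: "\<forall>v\<in>carrier_vec nc. A *\<^sub>v v = 0\<^sub>v n \<longrightarrow> v = 0\<^sub>v nc"
    show "indep_units {..<n} {..<nc} (\<lambda>k l. A $$ (k, l)) {}"
      unfolding indep_units_def
    proof (intro allI impI)
      fix c d :: "nat \<Rightarrow> 'a"
      assume "\<forall>k\<in>{..<n}. (\<Sum>l\<in>{..<nc}. c l * A $$ (k, l)) + (if k \<in> {} then d k else 0) = 0"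
      then have "A *\<^sub>v vec nc c = 0\<^sub>v n"
        using A mult[of "vec nc c"] by (intro eq_vecI) auto
      then have "vec nc c = 0\<^sub>v nc" using ker by auto
      then have "vec nc c $ l = 0" if "l < nc" for l using that by simp
      then show "(\<forall>l\<in>{..<nc}. c l = 0) \<and> (\<forall>x\<in>{}. d x = 0)" by simp
    qed
  next
    assume indep: "indep_units {..<n} {..<nc} (\<lambda>k l. A $$ (k, l)) {}"
    show "\<forall>v\<in>carrier_vec nc. A *\<^sub>v v = 0\<^sub>v n \<longrightarrow> v = 0\<^sub>v nc"
    proof (intro ballI impI)
      fix v :: "'a vec" assume v: "v \<in> carrier_vec nc" and "A *\<^sub>v v = 0\<^sub>v n"
      then have "(\<Sum>l\<in>{..<nc}. v $ l * A $$ (k, l)) = 0" if "k < n" for k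
        using mult[OF v that] that by simp
      then have "\<forall>l\<in>{..<nc}. v $ l = 0"
        using spec[OF spec[OF indep[unfolded indep_units_def], of "\<lambda>l. v $ l"], of "\<lambda>_. 0"] by simp
      then show "v = 0\<^sub>v nc" using v by (intro eq_vecI) auto
    qed
  qed
qed

lemma edge_orientation_ug_adj:
  assumes "edge_orientation n w ne ep"
  shows "ug_adj n w = edge_adj ep {..<ne}"
proof (intro ext iffI)
  fix i j assume "ug_adj n w i j"
  then have "{i, j} \<in> (\<lambda>l. {fst (ep l), snd (ep l)}) ` {..<ne}"
    using assms unfolding edge_orientation_def bij_betw_def by blast
  then show "edge_adj ep {..<ne} i j" unfolding edge_adj_def by auto
next
  fix i j assume "edge_adj ep {..<ne} i j"
  then obtain l where "l < ne" "{i, j} = {fst (ep l), snd (ep l)}" unfolding edge_adj_def by auto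
  moreover have "ug_adj n w (fst (ep l)) (snd (ep l))"
    using assms \<open>l < ne\<close> unfolding edge_orientation_def by blast
  ultimately show "ug_adj n w i j" unfolding ug_adj_def by (auto simp: doubleton_eq_iff)
qed

lemma edge_orientation_ends:
  assumes "edge_orientation n w ne ep" and "l < ne"
  shows "fst (ep l) < n" "snd (ep l) < n" "fst (ep l) \<noteq> snd (ep l)"
  using assms unfolding edge_orientation_def ug_adj_def by auto

lemma edge_orientation_leaf_tree:
  assumes "edge_orientation n w ne ep" and "ug_tree {..<n} (ug_adj n w)" and "n \<noteq> 0"
  shows "leaf_tree ep {..<n} {..<ne}"
proof (rule ug_tree_imp_leaf_tree)
  show "inj_on (\<lambda>l. {fst (ep l), snd (ep l)}) {..<ne}"
    using assms(1) unfolding edge_orientation_def by (blast intro: bij_betw_imp_inj_on)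
  show "ug_tree {..<n} (edge_adj ep {..<ne})"
    using assms(2) edge_orientation_ug_adj[OF assms(1)] by simp
qed (use assms(3) edge_orientation_ends[OF assms(1)] in auto)

lemma weighted_F_index:
  "k < n \<Longrightarrow> l < ne \<Longrightarrow> weighted_F n w ne ep $$ (k, l) =
    (if k = fst (ep l) then w (fst (ep l)) (snd (ep l))
     else if k = snd (ep l) then - w (snd (ep l)) (fst (ep l)) else 0)"
  unfolding weighted_F_def by simp

lemma weighted_F_supported_on_edges:
  "supported_on_edges ep {..<n} {..<ne} (\<lambda>k l. weighted_F n w ne ep $$ (k, l))"
  unfolding supported_on_edges_def by (auto simp: weighted_F_index)

lemma rooted_spanning_tree_reaches:
  assumes "directed_rooted_spanning_tree V A T r" and "x \<in> V"
  shows "(r, x) \<in> T\<^sup>*"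
proof -
  have r: "r \<in> V" and root: "\<forall>u. (u, r) \<notin> T" and parent: "\<forall>v\<in>V. v \<noteq> r \<longrightarrow> (\<exists>!u. (u, v) \<in> T)"
    and "ug_connected V (\<lambda>a b. (a, b) \<in> T \<or> (b, a) \<in> T)"
    using assms(1) unfolding directed_rooted_spanning_tree_def ug_tree_def by auto
  then have "(r, x) \<in> {(a, b). a \<in> V \<and> b \<in> V \<and> ((a, b) \<in> T \<or> (b, a) \<in> T)}\<^sup>*"
    using assms(2) unfolding ug_connected_def by blast
  then show ?thesis
  proof (induction rule: rtrancl_induct)
    case base
    then show ?case by simp
  next
    case (step y z)
    then have y: "y \<in> V" "(y, z) \<in> T \<or> (z, y) \<in> T" by auto
    show ?case
    proof (cases "(y, z) \<in> T")
      case True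
      then show ?thesis using step.IH by (rule rtrancl_into_rtrancl[rotated])
    next
      case False
      \<comment> \<open>an undirected step against the direction of \<open>T\<close> goes back to the parent of \<open>y\<close>,
        which already lies on the path from \<open>r\<close>\<close>
      then have "(z, y) \<in> T" using y by blast
      then have "y \<noteq> r" using root by blast
      then obtain p where "(r, p) \<in> T\<^sup>*" "(p, y) \<in> T" using step.IH by (metis rtranclE)
      moreover have "p = z" using parent y(1) \<open>y \<noteq> r\<close> \<open>(p, y) \<in> T\<close> \<open>(z, y) \<in> T\<close> by blast
      ultimately show ?thesis by simp
    qed
  qed
qed

lemma drst_of_transversal:
  assumes w_nonneg: "\<forall>i<n. \<forall>j<n. i \<noteq> j \<longrightarrow> w i j \<ge> 0"
    and eo: "edge_orientation n w ne ep" and tree: "ug_tree {..<n} (ug_adj n w)"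
    and "r < n"
    and "has_transversal (\<lambda>k l. weighted_F n w ne ep $$ (k, l)) {..<ne} ({..<n} - {r})"
  shows "has_directed_rooted_spanning_tree n w"
proof -
  obtain h where h: "bij_betw h {..<ne} ({..<n} - {r})"
    and nz: "\<forall>l\<in>{..<ne}. weighted_F n w ne ep $$ (h l, l) \<noteq> 0"
    using assms(5) unfolding has_transversal_def by blast
  define tl where "tl l = (if h l = fst (ep l) then snd (ep l) else fst (ep l))" for l
  define T where "T = (\<lambda>l. (tl l, h l)) ` {..<ne}"
  have edge: "{tl l, h l} = {fst (ep l), snd (ep l)} \<and> (tl l, h l) \<in> dg_arcs n w" if l: "l < ne" for l
  proof -
    have hl: "h l < n" using h l unfolding bij_betw_def by auto
    note ends = edge_orientation_ends[OF eo l]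
    have entry: "weighted_F n w ne ep $$ (h l, l) \<noteq> 0" using nz l by blast
    then have head: "h l = fst (ep l) \<or> h l = snd (ep l)" using weighted_F_index[OF hl l, of w ep] by (auto split: if_splits)
    moreover have "w (h l) (tl l) \<noteq> 0"
      using entry head ends(3) unfolding weighted_F_index[OF hl l, of w ep] tl_def by (auto split: if_splits)
    moreover have "w (h l) (tl l) \<ge> 0"
      using w_nonneg head ends unfolding tl_def by auto
    ultimately show ?thesis using ends hl unfolding dg_arcs_def tl_def by auto
  qed
  have "(\<lambda>a b. (a, b) \<in> T \<or> (b, a) \<in> T) = edge_adj ep {..<ne}"
  proof (intro ext iffI)
    fix a b assume "(a, b) \<in> T \<or> (b, a) \<in> T"
    then obtain l where "l < ne" "{a, b} = {tl l, h l}" unfolding T_def by (auto simp: insert_commute)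
    then show "edge_adj ep {..<ne} a b" using edge unfolding edge_adj_def by auto
  next
    fix a b assume "edge_adj ep {..<ne} a b"
    then obtain l where "l < ne" "{a, b} = {tl l, h l}" using edge unfolding edge_adj_def by auto
    then show "(a, b) \<in> T \<or> (b, a) \<in> T" unfolding T_def by (auto simp: doubleton_eq_iff)
  qed
  then have undirected: "ug_tree {..<n} (\<lambda>a b. (a, b) \<in> T \<or> (b, a) \<in> T)"
    using tree edge_orientation_ug_adj[OF eo] by simp
  have "directed_rooted_spanning_tree {..<n} (dg_arcs n w) T r"
    unfolding directed_rooted_spanning_tree_def
  proof (intro conjI allI ballI impI undirected)
    show "T \<subseteq> dg_arcs n w" using edge unfolding T_def by auto
    then show "T \<subseteq> {..<n} \<times> {..<n}" unfolding dg_arcs_def by auto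
    show "r \<in> {..<n}" using \<open>r < n\<close> by simp
    show "(y, r) \<notin> T" for y using h unfolding T_def bij_betw_def by auto
  next
    fix y assume "y \<in> {..<n}" "y \<noteq> r"
    then obtain l where l: "l < ne" "h l = y" using h unfolding bij_betw_def by (metis Diff_iff imageE lessThan_iff singletonD)
    show "\<exists>!p. (p, y) \<in> T"
    proof (rule ex1I[of _ "tl l"])
      show "(tl l, y) \<in> T" using l unfolding T_def by auto
    next
      fix p assume "(p, y) \<in> T"
      then obtain l' where "l' < ne" "p = tl l'" "h l' = y" unfolding T_def by auto
      then show "p = tl l" using h l unfolding bij_betw_def inj_on_def by auto
    qed
  qed
  then show ?thesis unfolding has_directed_rooted_spanning_tree_def by blast
qed

lemma dg_arcs_subset_support_arcs:
  assumes w_nonneg: "\<forall>i<n. \<forall>j<n. i \<noteq> j \<longrightarrow> w i j \<ge> 0"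
    and eo: "edge_orientation n w ne ep"
  shows "dg_arcs n w \<subseteq> support_arcs ep {..<ne} (\<lambda>k l. weighted_F n w ne ep $$ (k, l))"
proof
  fix p assume "p \<in> dg_arcs n w"
  then obtain i j where p: "p = (i, j)" "i < n" "j < n" "i \<noteq> j" "0 < w j i"
    unfolding dg_arcs_def by auto
  then have "ug_adj n w i j" using w_nonneg unfolding ug_adj_def by (simp add: add_nonneg_pos)
  then obtain l where l: "l < ne" "{i, j} = {fst (ep l), snd (ep l)}"
    unfolding edge_orientation_ug_adj[OF eo] edge_adj_def by auto
  then have "weighted_F n w ne ep $$ (j, l) \<noteq> 0"
    using p weighted_F_index[OF p(3) l(1), of w ep] by (auto simp: doubleton_eq_iff)
  then show "p \<in> support_arcs ep {..<ne} (\<lambda>k l. weighted_F n w ne ep $$ (k, l))"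
    using l p unfolding support_arcs_def by auto
qed

lemma transversal_of_drst:
  assumes w_nonneg: "\<forall>i<n. \<forall>j<n. i \<noteq> j \<longrightarrow> w i j \<ge> 0"
    and eo: "edge_orientation n w ne ep" and tree: "leaf_tree ep {..<n} {..<ne}"
    and "has_directed_rooted_spanning_tree n w"
  shows "\<exists>r\<in>{..<n}. has_transversal (\<lambda>k l. weighted_F n w ne ep $$ (k, l)) {..<ne} ({..<n} - {r})"
proof -
  obtain T r where D: "directed_rooted_spanning_tree {..<n} (dg_arcs n w) T r"
    using assms(4) unfolding has_directed_rooted_spanning_tree_def by blast
  then have "r \<in> {..<n}" and "T \<subseteq> support_arcs ep {..<ne} (\<lambda>k l. weighted_F n w ne ep $$ (k, l))"
    using dg_arcs_subset_support_arcs[OF w_nonneg eo]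
    unfolding directed_rooted_spanning_tree_def by blast+
  then have "\<forall>x\<in>{..<n}. (r, x) \<in> (support_arcs ep {..<ne} (\<lambda>k l. weighted_F n w ne ep $$ (k, l)))\<^sup>*"
    using rooted_spanning_tree_reaches[OF D] rtrancl_mono by blast
  then show ?thesis
    using transversal_if_reachable[OF tree weighted_F_supported_on_edges \<open>r \<in> {..<n}\<close>] \<open>r \<in> {..<n}\<close>
    by blast
qed

theorem lemma3:
  fixes n ne :: nat and w :: "nat \<Rightarrow> nat \<Rightarrow> real" and ep :: "nat \<Rightarrow> nat \<times> nat"
  assumes "n \<ge> 2"
    and "\<forall>i<n. \<forall>j<n. i \<noteq> j \<longrightarrow> w i j \<ge> 0"
    and "ug_tree {..<n} (ug_adj n w)"
    and "edge_orientation n w ne ep"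
  shows "vec_space.rank n (weighted_F n w ne ep) = n - 1
         \<longleftrightarrow> has_directed_rooted_spanning_tree n w"
proof -
  let ?M = "\<lambda>k l. weighted_F n w ne ep $$ (k, l)"
  have tree: "leaf_tree ep {..<n} {..<ne}"
    using edge_orientation_leaf_tree[OF assms(4,3)] assms(1) by simp
  then have "n - 1 = ne" using leaf_tree_card[OF tree] by simp
  have F: "weighted_F n w ne ep \<in> carrier_mat n ne" unfolding weighted_F_def by simp
  have "vec_space.rank n (weighted_F n w ne ep) = n - 1 \<longleftrightarrow> indep_units {..<n} {..<ne} ?M {}"
    unfolding \<open>n - 1 = ne\<close> vec_space.rank_eq_iff_kernel_trivial[OF F]
    by (rule kernel_trivial_iff_indep_units[OF F])
  also have "\<dots> \<longleftrightarrow> (\<exists>r\<in>{..<n}. has_transversal ?M {..<ne} ({..<n} - {r}))"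
    by (rule leaf_tree_indep_iff_rooted_transversal[OF tree weighted_F_supported_on_edges])
  also have "\<dots> \<longleftrightarrow> has_directed_rooted_spanning_tree n w"
    using drst_of_transversal[OF assms(2,4,3)] transversal_of_drst[OF assms(2,4) tree] by blast
  finally show ?thesis .
qed

end
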